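(* For all integers $m\ge1$ and $j\ge0$, \[b_{\mathcal{G}}(m,m+j,2)=q^{m+\binom{m+1}{2}+\binom j2}{m-1\brack j-1}.\]
   Context: An overpartition is a partition in which the first occurrence of each part size may be overlined, with parts listed in non-increasing order with respect to $1<\bar1<2<\bar2<\cdots$. A part is of size $t$ if it is $t$ or $\bar t$, and $|\pi|$ is the sum of the sizes of the parts. For $m\ge1$, $\mathcal{G}(m)$ is the set of overpartitions $(\pi_1,\dots,\pi_m)$ such that for every $1\le i<m$, if $\pi_{i+1}$ has size $t$ then $\pi_i\in\{\overline{t+1},\,t+2\}$. $b_{\mathcal{G}}(m,j,2)$ is $\sum q^{|\pi|}$ over $\pi\in\mathcal{G}(m)$ whose largest part has size $j$ and whose smallest part is the non-overlined part $2$. The Gaussian binomial is ${M\brack N}=\frac{(q;q)_M}{(q;q)_N(q;q)_{M-N}}$ for $0\le N\le M$ and $0$ otherwise; in particular ${m-1\brack -1}=0$. *)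

theory Defs
  imports "HOL-Computational_Algebra.Polynomial"
begin

text \<open>A part of an overpartition: (size, overlined?). Size must be at least 1.\<close>
type_synonym opart = "nat \<times> bool"

definition part_size :: "opart \<Rightarrow> nat" where
  "part_size p = fst p"

definition opart_le :: "opart \<Rightarrow> opart \<Rightarrow> bool" where
  "opart_le p p' \<longleftrightarrow> fst p < fst p' \<or> (fst p = fst p' \<and> (snd p \<longrightarrow> snd p'))"

text \<open>Overpartition: parts listed in non-increasing order; only the first occurrence
  of a size may be overlined (so each overlined part occurs at most once).\<close>
definition is_overpartition :: "opart list \<Rightarrow> bool" where
  "is_overpartition xs \<longleftrightarrow>
     (\<forall>p\<in>set xs. part_size p \<ge> 1) \<and>
     sorted_wrt (\<lambda>x y. opart_le y x) xs \<and>
     (\<forall>i k. i < k \<and> k < length xs \<and> part_size (xs!i) = part_size (xs!k) \<longrightarrow> \<not> snd (xs!k))"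

definition opart_weight :: "opart list \<Rightarrow> nat" where
  "opart_weight xs = sum_list (map part_size xs)"

definition G_set :: "nat \<Rightarrow> opart list set" where
  "G_set m = {xs. is_overpartition xs \<and> length xs = m \<and>
     (\<forall>i. Suc i < m \<longrightarrow>
        xs!i \<in> {(part_size (xs!Suc i) + 1, True), (part_size (xs!Suc i) + 2, False)})}"

text \<open>b_G(m,j,2) as a polynomial in q.\<close>
definition bG2 :: "nat \<Rightarrow> nat \<Rightarrow> int poly" where
  "bG2 m j = (\<Sum>xs\<in>{xs\<in>G_set m. part_size (hd xs) = j \<and> last xs = (2, False)}.
              monom 1 (opart_weight xs))"

definition qpoch :: "nat \<Rightarrow> int poly" where
  "qpoch n = (\<Prod>i=1..n. 1 - monom 1 i)"

definition gauss_binom :: "int \<Rightarrow> int \<Rightarrow> int poly" where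
  "gauss_binom M N = (if 0 \<le> N \<and> N \<le> M
     then qpoch (nat M) div (qpoch (nat N) * qpoch (nat (M - N))) else 0)"

end

theory Submission
  imports Defs
begin

text \<open>In an element of \<open>\<G>(m)\<close> each part is determined by its successor together with a
  single bit (overlined and one larger, or plain and two larger), so the overpartitions ending
  in the plain part \<open>2\<close> are exactly the chains grown from \<open>2\<close> by these two steps; they are
  automatically overpartitions since the sizes strictly decrease. Removing the largest part
  \<open>j\<close> gives \<open>b(m+2, j+2) = q\<^bsup>j+2\<^esup> (b(m+1, j+1) + b(m+1, j))\<close>, and after factoring out the
  claimed power of \<open>q\<close> this becomes the \<open>q\<close>-Pascal recurrence
  \<open>[n+1, k] = q\<^sup>k [n, k] + [n, k-1]\<close>. Finally this recurrence determines the Gaussian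
  binomial, as it is compatible with \<open>[n, k] (q;q)\<^sub>k (q;q)\<^sub>n\<^sub>-\<^sub>k = (q;q)\<^sub>n\<close>.\<close>

fun G_chain :: "opart list \<Rightarrow> bool" where
  "G_chain [] = False"
| "G_chain [x] = (x = (2, False))"
| "G_chain (x # y # ys) = ((x = (fst y + 1, True) \<or> x = (fst y + 2, False)) \<and> G_chain (y # ys))"

definition G_adjacent :: "opart list \<Rightarrow> bool" where
  "G_adjacent xs \<longleftrightarrow> (\<forall>i. Suc i < length xs \<longrightarrow>
     xs!i \<in> {(part_size (xs!Suc i) + 1, True), (part_size (xs!Suc i) + 2, False)})"

lemma G_chain_strictly_decreasing:
  "G_chain xs \<Longrightarrow> sorted_wrt (\<lambda>a b. fst b < fst a) xs \<and> (\<forall>p\<in>set xs. 2 \<le> fst p)"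
proof (induction xs rule: G_chain.induct)
  case (3 x y ys)
  then have "sorted_wrt (\<lambda>a b. fst b < fst a) (y # ys)" "\<forall>p\<in>set (y # ys). 2 \<le> fst p"
    "fst y < fst x" by auto
  then show ?case by auto
qed auto

lemma G_chain_length_less_hd: "G_chain xs \<Longrightarrow> length xs < fst (hd xs)"
  by (induction xs rule: G_chain.induct) auto

lemma G_chain_iff_adjacent:
  "G_chain xs \<longleftrightarrow> xs \<noteq> [] \<and> G_adjacent xs \<and> last xs = (2, False)"
proof (induction xs rule: G_chain.induct)
  case (3 x y ys)
  have "G_adjacent (x # y # ys) \<longleftrightarrow>
      x \<in> {(fst y + 1, True), (fst y + 2, False)} \<and> G_adjacent (y # ys)"
    unfolding G_adjacent_def part_size_def
    by (auto simp: nth_Cons split: nat.splits) (metis Suc_less_eq nth_Cons_Suc)+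
  then show ?case using "3.IH" by auto
qed (auto simp: G_adjacent_def)

lemma G_chain_is_overpartition: "G_chain xs \<Longrightarrow> is_overpartition xs"
proof -
  assume "G_chain xs"
  then have dec: "sorted_wrt (\<lambda>a b. fst b < fst a) xs" and "\<forall>p\<in>set xs. 2 \<le> fst p"
    using G_chain_strictly_decreasing by auto
  moreover have "sorted_wrt (\<lambda>x y. opart_le y x) xs"
    by (rule sorted_wrt_mono_rel[OF _ dec]) (auto simp: opart_le_def)
  moreover have "part_size (xs!i) \<noteq> part_size (xs!k)" if "i < k" "k < length xs" for i k
    using sorted_wrt_nth_less[OF dec that] by (simp add: part_size_def)
  ultimately show ?thesis
    unfolding is_overpartition_def part_size_def by auto
qed

definition G_chains :: "nat \<Rightarrow> nat \<Rightarrow> opart list set" where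
  "G_chains m j = {xs. G_chain xs \<and> length xs = m \<and> fst (hd xs) = j}"

lemma bG2_index_set_eq_G_chains:
  assumes "1 \<le> m"
  shows "{xs\<in>G_set m. part_size (hd xs) = j \<and> last xs = (2, False)} = G_chains m j"
proof -
  have "G_set m = {xs. is_overpartition xs \<and> length xs = m \<and> G_adjacent xs}"
    unfolding G_set_def G_adjacent_def by auto
  then show ?thesis
    using assms G_chain_iff_adjacent G_chain_is_overpartition
    unfolding G_chains_def part_size_def by fastforce
qed

lemma G_chains_eq_empty: "j \<le> m \<Longrightarrow> G_chains m j = {}"
  unfolding G_chains_def using G_chain_length_less_hd by fastforce

lemma G_chains_one: "G_chains 1 j = (if j = 2 then {[(2, False)]} else {})"
proof -
  have "xs \<in> G_chains 1 j \<longleftrightarrow> xs \<in> (if j = 2 then {[(2, False)]} else {})" for xs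
    unfolding G_chains_def by (cases xs rule: G_chain.cases) auto
  then show ?thesis by blast
qed

lemma G_chains_Suc_Suc:
  "G_chains (Suc (Suc m)) (Suc (Suc j)) =
     Cons (Suc (Suc j), True) ` G_chains (Suc m) (Suc j) \<union>
     Cons (Suc (Suc j), False) ` G_chains (Suc m) j"
proof -
  have "xs \<in> G_chains (Suc (Suc m)) (Suc (Suc j)) \<longleftrightarrow>
      xs \<in> Cons (Suc (Suc j), True) ` G_chains (Suc m) (Suc j) \<union>
           Cons (Suc (Suc j), False) ` G_chains (Suc m) j" for xs
    unfolding G_chains_def by (cases xs rule: G_chain.cases) auto
  then show ?thesis by blast
qed

lemma finite_G_chains: "finite (G_chains m j)"
proof (rule finite_subset)
  show "G_chains m j \<subseteq> {xs. set xs \<subseteq> {..j} \<times> UNIV \<and> length xs = m}"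
  proof
    fix xs assume "xs \<in> G_chains m j"
    then have "G_chain xs" "length xs = m" "fst (hd xs) = j"
      unfolding G_chains_def by auto
    then have "\<forall>p\<in>set xs. fst p \<le> j"
      using G_chain_strictly_decreasing[of xs] by (cases xs) (auto intro: less_imp_le)
    with \<open>length xs = m\<close> show "xs \<in> {xs. set xs \<subseteq> {..j} \<times> UNIV \<and> length xs = m}"
      by auto
  qed
  show "finite {xs. set xs \<subseteq> {..j} \<times> (UNIV :: bool set) \<and> length xs = m}"
    by (rule finite_lists_length_eq) simp
qed

definition chains_gf :: "nat \<Rightarrow> nat \<Rightarrow> int poly" where
  "chains_gf m j = (\<Sum>xs\<in>G_chains m j. monom 1 (opart_weight xs))"

lemma chains_gf_eq_0: "j \<le> m \<Longrightarrow> chains_gf m j = 0"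
  unfolding chains_gf_def by (simp add: G_chains_eq_empty)

lemma chains_gf_one: "chains_gf 1 j = (if j = 2 then monom 1 2 else 0)"
  unfolding chains_gf_def G_chains_one by (simp add: opart_weight_def part_size_def)

lemma chains_gf_Suc_Suc:
  "chains_gf (Suc (Suc m)) (Suc (Suc j)) =
     monom 1 (Suc (Suc j)) * (chains_gf (Suc m) (Suc j) + chains_gf (Suc m) j)"
proof -
  have cons_sum: "(\<Sum>xs\<in>Cons (Suc (Suc j), b) ` A. monom 1 (opart_weight xs)) =
      monom 1 (Suc (Suc j)) * (\<Sum>xs\<in>A. monom (1::int) (opart_weight xs))" for b A
    by (simp add: sum.reindex sum_distrib_left mult_monom opart_weight_def part_size_def)
  have "Cons (Suc (Suc j), True) ` G_chains (Suc m) (Suc j) \<inter>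
        Cons (Suc (Suc j), False) ` G_chains (Suc m) j = {}"
    by auto
  then show ?thesis
    unfolding chains_gf_def G_chains_Suc_Suc
    by (simp add: sum.union_disjoint finite_G_chains cons_sum distrib_left)
qed

fun qbinom :: "nat \<Rightarrow> nat \<Rightarrow> int poly" where
  "qbinom n 0 = 1"
| "qbinom 0 (Suc k) = 0"
| "qbinom (Suc n) (Suc k) = monom 1 (Suc k) * qbinom n (Suc k) + qbinom n k"

lemma qbinom_eq_0: "n < k \<Longrightarrow> qbinom n k = 0"
  by (induction n k rule: qbinom.induct) auto

lemma qbinom_diag: "qbinom n n = 1"
  by (induction n) (simp_all add: qbinom_eq_0)

lemma qpoch_0: "qpoch 0 = 1"
  unfolding qpoch_def by simp

lemma qpoch_Suc: "qpoch (Suc n) = qpoch n * (1 - monom 1 (Suc n))"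
  unfolding qpoch_def by (simp add: prod.cl_ivl_Suc)

lemma qpoch_nonzero: "qpoch n \<noteq> 0"
proof (induction n)
  case (Suc n)
  have "coeff (1 - monom (1::int) (Suc n)) 0 = 1"
    by (simp add: coeff_monom)
  then have "1 - monom (1::int) (Suc n) \<noteq> 0"
    by (metis coeff_0 zero_neq_one)
  with Suc show ?case by (simp add: qpoch_Suc)
qed (simp add: qpoch_0)

lemma pascal_product_step:
  fixes a b c c' x y Q :: "'a::comm_ring_1"
  assumes "a * (c * (1 - x)) * c' = Q" and "b * c * (c' * (1 - y)) = Q"
  shows "(x * a + b) * (c * (1 - x)) * (c' * (1 - y)) = Q * (1 - x * y)"
proof -
  have "(x * a + b) * (c * (1 - x)) * (c' * (1 - y)) =
      x * (1 - y) * (a * (c * (1 - x)) * c') + (1 - x) * (b * c * (c' * (1 - y)))"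
    by (simp add: algebra_simps)
  also have "\<dots> = Q * (1 - x * y)"
    using assms by (simp add: algebra_simps)
  finally show ?thesis .
qed

lemma qbinom_qpoch: "k \<le> n \<Longrightarrow> qbinom n k * qpoch k * qpoch (n - k) = qpoch n"
proof (induction n arbitrary: k)
  case 0
  then show ?case by (simp add: qpoch_0)
next
  case (Suc n)
  consider "k = 0" | "k = Suc n" | k' where "k = Suc k'" "k' < n"
    using Suc.prems by (cases k) (auto simp: le_less)
  then show ?case
  proof cases
    case 3
    define r where "r = n - Suc k'"
    have n: "n = Suc k' + r" and n_minus: "n - k' = Suc r" "Suc n - Suc k' = Suc r"
      using 3 by (auto simp: r_def)
    have "qbinom (Suc n) k * qpoch k * qpoch (Suc n - k) =
        (monom 1 (Suc k') * qbinom n (Suc k') + qbinom n k') *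
        (qpoch k' * (1 - monom 1 (Suc k'))) * (qpoch r * (1 - monom 1 (Suc r)))"
      by (simp only: 3 n_minus qpoch_Suc qbinom.simps)
    also have "\<dots> = qpoch n * (1 - monom 1 (Suc k') * monom 1 (Suc r))"
      using Suc.IH[of "Suc k'"] Suc.IH[of k'] 3
      by (intro pascal_product_step) (simp_all add: r_def n_minus qpoch_Suc)
    also have "\<dots> = qpoch (Suc n)"
      by (simp add: qpoch_Suc mult_monom n)
    finally show ?thesis .
  qed (simp_all add: qpoch_0 qbinom_diag)
qed

lemma gauss_binom_eq_qbinom: "gauss_binom (int n) (int k) = qbinom n k"
proof (cases "k \<le> n")
  case True
  have "qpoch n = qbinom n k * (qpoch k * qpoch (n - k))"
    using qbinom_qpoch[OF True] by (simp add: mult.assoc)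
  moreover have "qpoch k * qpoch (n - k) \<noteq> 0"
    by (simp add: qpoch_nonzero)
  ultimately show ?thesis
    using True unfolding gauss_binom_def by (simp add: nat_diff_distrib)
next
  case False
  then show ?thesis by (simp add: gauss_binom_def qbinom_eq_0)
qed

lemma choose_two_Suc: "Suc n choose 2 = (n choose 2) + n"
  by (simp add: numeral_2_eq_2)

lemma chains_gf_closed_form:
  "chains_gf (Suc n) (Suc n + Suc k) =
     monom 1 (Suc n + (Suc (Suc n) choose 2) + (Suc k choose 2)) * qbinom n k"
proof (induction n arbitrary: k)
  case 0
  then show ?case by (cases k) (simp_all add: chains_gf_one[unfolded One_nat_def] numeral_2_eq_2)
next
  case (Suc n)
  let ?e = "\<lambda>n k. Suc n + (Suc (Suc n) choose 2) + (Suc k choose 2)"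
  have step: "chains_gf (Suc (Suc n)) (Suc (Suc n) + Suc k) =
      monom 1 (n + k + 3) * (chains_gf (Suc n) (Suc n + Suc k) + chains_gf (Suc n) (Suc n + k))"
    using chains_gf_Suc_Suc[of n "Suc n + k"] by (simp add: numeral_3_eq_3)
  show ?case
  proof (cases k)
    case 0
    have "chains_gf (Suc (Suc n)) (Suc (Suc n) + Suc k) = monom 1 (n + 3 + ?e n 0)"
      using step Suc.IH[of 0] by (simp add: 0 chains_gf_eq_0 mult_monom)
    also have "n + 3 + ?e n 0 = ?e (Suc n) 0"
      by (simp add: choose_two_Suc)
    finally show ?thesis
      by (simp add: 0)
  next
    case (Suc l)
    have "chains_gf (Suc (Suc n)) (Suc (Suc n) + Suc k) =
        monom 1 (n + k + 3) * (monom 1 (?e n k) * qbinom n k + monom 1 (?e n l) * qbinom n l)"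
      using step Suc.IH[of k] Suc.IH[of l] by (simp only: Suc)
    also have "\<dots> = monom 1 (n + k + 3 + ?e n k) * qbinom n k + monom 1 (n + k + 3 + ?e n l) * qbinom n l"
      by (simp only: distrib_left mult.assoc[symmetric] mult_monom mult_1)
    also have "n + k + 3 + ?e n k = ?e (Suc n) k + k"
      by (simp add: choose_two_Suc)
    also have "n + k + 3 + ?e n l = ?e (Suc n) k"
      by (simp add: Suc choose_two_Suc)
    also have "monom 1 (?e (Suc n) k + k) * qbinom n k + monom 1 (?e (Suc n) k) * qbinom n l =
        monom 1 (?e (Suc n) k) * qbinom (Suc n) k"
      by (simp add: Suc distrib_left mult_monom add.commute flip: mult.assoc)
    finally show ?thesis .
  qed
qed

theorem mainTheorem18:
  fixes m j :: nat
  assumes "m \<ge> 1"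
  shows "bG2 m (m + j) =
    monom 1 (m + ((m + 1) choose 2) + (j choose 2)) * gauss_binom (int m - 1) (int j - 1)"
proof -
  obtain n where m: "m = Suc n"
    using assms by (cases m) auto
  have bG2_eq: "bG2 m (m + j) = chains_gf m (m + j)"
    unfolding bG2_def chains_gf_def bG2_index_set_eq_G_chains[OF assms] ..
  show ?thesis
  proof (cases j)
    case 0
    then show ?thesis using bG2_eq by (simp add: chains_gf_eq_0 gauss_binom_def)
  next
    case (Suc k)
    have "gauss_binom (int m - 1) (int j - 1) = qbinom n k"
      using gauss_binom_eq_qbinom[of n k] by (simp add: m Suc)
    then show ?thesis
      using chains_gf_closed_form[of n k] bG2_eq by (simp add: m Suc)
  qed
qed

end
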